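(* Let $q$ be a prime power and let $n,k,r$ be integers with $3\le k\le n-2\le q-2$ and $1\le r\le k-1$. Let $\alpha_1,\dots,\alpha_n\in\mathbb{F}_q$ be pairwise distinct. Let $C_{k-r,k-r-1}$ be the linear code generated by the $k\times n$ matrix $G_{k-r,k-r-1}$ whose rows are $(\alpha_1^{e},\dots,\alpha_n^{e})$ for $e=0,1,\dots,k-r-2$ and $e=k-r+1,k-r+2,\dots,k+1$. Then $C_{k-r,k-r-1}$ is MDS if and only if $$\sigma_{r+1}(\beta_1,\dots,\beta_k)^2-\sigma_r(\beta_1,\dots,\beta_k)\,\sigma_{r+2}(\beta_1,\dots,\beta_k)\neq 0$$ for every $k$-element subset $\{\beta_1,\dots,\beta_k\}\subseteq\{\alpha_1,\dots,\alpha_n\}$ (with distinct $\beta_i$).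
   Context: Convention: $0^0=1$. $\sigma_t(x_1,\dots,x_m)$ is the $t$-th elementary symmetric polynomial, with $\sigma_0=1$ and $\sigma_t=0$ for $t>m$. A linear code is MDS if its parameters $[n,k,d]$ satisfy $d=n-k+1$. *)

theory Defs
  imports Complex_Main "HOL-Library.Function_Algebras"
begin

text \<open>Words of length n over a field are functions nat => 'a vanishing outside {..<n}
  (coordinates 0..n-1).\<close>

definition hamming_dist :: "nat \<Rightarrow> (nat \<Rightarrow> 'a) \<Rightarrow> (nat \<Rightarrow> 'a) \<Rightarrow> nat" where
  "hamming_dist n c c' = card {j. j < n \<and> c j \<noteq> c' j}"

definition gen_code :: "nat \<Rightarrow> nat \<Rightarrow> (nat \<Rightarrow> nat \<Rightarrow> 'a::field) \<Rightarrow> (nat \<Rightarrow> 'a) set" where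
  "gen_code n k G = {c. \<exists>m::nat \<Rightarrow> 'a. c = (\<lambda>j. if j < n then (\<Sum>i<k. m i * G i j) else 0)}"

definition word_scale :: "'a::field \<Rightarrow> (nat \<Rightarrow> 'a) \<Rightarrow> (nat \<Rightarrow> 'a)" where
  "word_scale a c = (\<lambda>j. a * c j)"

definition code_dim :: "(nat \<Rightarrow> 'a::field) set \<Rightarrow> nat" where
  "code_dim C = vector_space.dim word_scale C"

definition min_dist :: "nat \<Rightarrow> (nat \<Rightarrow> 'a) set \<Rightarrow> nat" where
  "min_dist n C = Min {hamming_dist n c c' | c c'. c \<in> C \<and> c' \<in> C \<and> c \<noteq> c'}"

definition is_MDS :: "nat \<Rightarrow> (nat \<Rightarrow> 'a::field) set \<Rightarrow> bool" where
  "is_MDS n C \<longleftrightarrow> min_dist n C = n - code_dim C + 1"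

text \<open>t-th elementary symmetric polynomial of the elements of a finite set B
  (sigma_0 = 1, sigma_t = 0 for t > card B).\<close>
definition esym :: "nat \<Rightarrow> 'a::comm_ring_1 set \<Rightarrow> 'a" where
  "esym t B = (\<Sum>T\<in>{T. T \<subseteq> B \<and> card T = t}. \<Prod>T)"

text \<open>Exponents of the rows of G_{k-r,k-r-1}: 0..k-r-2, then k-r+1..k+1.\<close>
definition row_exp :: "nat \<Rightarrow> nat \<Rightarrow> nat \<Rightarrow> nat" where
  "row_exp k r i = (if i < k - r - 1 then i else i + 2)"

definition G_mat :: "nat \<Rightarrow> nat \<Rightarrow> (nat \<Rightarrow> 'a::field) \<Rightarrow> nat \<Rightarrow> nat \<Rightarrow> 'a" where
  "G_mat k r \<alpha> i j = \<alpha> j ^ row_exp k r i"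

end

(* The rows of G_{k-r,k-r-1} are the monomials x^e with e <= k+1 and e not in {k-r-1, k-r}, so the
   code consists of the evaluation words at alpha_1, ..., alpha_n of the polynomials of degree at
   most k+1 whose coefficients of x^(k-r-1) and x^(k-r) vanish. These form a k-dimensional space
   containing, for any k-1 points, a nonzero member vanishing at them (three free coefficients after
   factoring out the k-1 roots, two linear conditions), so the minimum distance is at most n-k+1 and
   the code is MDS iff no nonzero member vanishes on a k-subset B of the alpha_j. Such a member is
   prod_(b in B) (x - b) * (u + v x), and by Vieta the two vanishing coefficients form the system
     u sigma_(r+1) = v sigma_(r+2),   u sigma_r = v sigma_(r+1)
   in (u, v), which has a nontrivial solution iff sigma_(r+1)^2 = sigma_r sigma_(r+2). *)

theory Submission
  imports Defs "HOL-Computational_Algebra.Polynomial"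
begin

lemma singular_2x2_iff:
  fixes a b c d :: "'a::field"
  shows "(\<exists>u v. (u \<noteq> 0 \<or> v \<noteq> 0) \<and> u * a = v * b \<and> u * c = v * d) \<longleftrightarrow> a * d = b * c"
proof
  assume "\<exists>u v. (u \<noteq> 0 \<or> v \<noteq> 0) \<and> u * a = v * b \<and> u * c = v * d"
  then obtain u v where uv: "u \<noteq> 0 \<or> v \<noteq> 0" "u * a = v * b" "u * c = v * d"
    by blast
  have "u * (a * d - b * c) = d * (u * a) - b * (u * c)" by (simp add: algebra_simps)
  also have "\<dots> = d * (v * b) - b * (v * d)" using uv(2,3) by simp
  also have "\<dots> = 0" by (simp add: algebra_simps)
  finally have u: "u * (a * d - b * c) = 0" .
  have "v * (a * d - b * c) = a * (v * d) - c * (v * b)" by (simp add: algebra_simps)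
  also have "\<dots> = a * (u * c) - c * (u * a)" using uv(2,3) by simp
  also have "\<dots> = 0" by (simp add: algebra_simps)
  finally have v: "v * (a * d - b * c) = 0" .
  from uv(1) u v show "a * d = b * c" by auto
next
  assume det: "a * d = b * c"
  consider "a \<noteq> 0 \<or> b \<noteq> 0" | "c \<noteq> 0 \<or> d \<noteq> 0" | "a = 0" "b = 0" "c = 0" "d = 0"
    by blast
  then show "\<exists>u v. (u \<noteq> 0 \<or> v \<noteq> 0) \<and> u * a = v * b \<and> u * c = v * d"
  proof cases
    case 1
    with det show ?thesis by (intro exI[of _ b] exI[of _ a]) (auto simp: algebra_simps)
  next
    case 2
    with det show ?thesis by (intro exI[of _ d] exI[of _ c]) (auto simp: algebra_simps)
  next
    case 3
    then show ?thesis by (intro exI[of _ 1] exI[of _ 0]) auto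
  qed
qed

lemma nontrivial_solution_2x3:
  fixes a1 a2 a3 b1 b2 b3 :: "'a::field"
  shows "\<exists>c1 c2 c3. (c1 \<noteq> 0 \<or> c2 \<noteq> 0 \<or> c3 \<noteq> 0) \<and>
    a1 * c1 + a2 * c2 + a3 * c3 = 0 \<and> b1 * c1 + b2 * c2 + b3 * c3 = 0"
proof (cases "a1 * b2 = a2 * b1")
  case True
  then obtain u v where "(u \<noteq> 0 \<or> v \<noteq> 0) \<and> u * a1 = v * - a2 \<and> u * b1 = v * - b2"
    using singular_2x2_iff[of a1 "- a2" b1 "- b2"] by auto
  then show ?thesis by (intro exI[of _ u] exI[of _ v] exI[of _ 0]) (auto simp: algebra_simps)
next
  case False
  then show ?thesis
    by (intro exI[of _ "a2 * b3 - a3 * b2"] exI[of _ "a3 * b1 - a1 * b3"] exI[of _ "a1 * b2 - a2 * b1"])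
       (auto simp: algebra_simps)
qed

lemma linear_factors_dvd:
  fixes f :: "'a::idom poly"
  assumes "finite B" and "\<And>b. b \<in> B \<Longrightarrow> poly f b = 0"
  shows "(\<Prod>b\<in>B. [:-b, 1:]) dvd f"
  using assms
proof (induction B arbitrary: f rule: finite_induct)
  case empty
  then show ?case by simp
next
  case (insert x B)
  have "[:-x, 1:] dvd f" using insert.prems by (simp add: poly_eq_0_iff_dvd)
  then obtain g where g: "f = [:-x, 1:] * g" by (elim dvdE)
  have "poly g b = 0" if "b \<in> B" for b
    using that insert g by force
  then have "(\<Prod>b\<in>B. [:-b, 1:]) dvd g" using insert.IH by blast
  then show ?case unfolding g prod.insert[OF insert.hyps] by (rule mult_dvd_mono[OF dvd_refl])
qed

lemma degree_linear_factors:
  "finite B \<Longrightarrow> degree (\<Prod>b\<in>B. [:-b, 1::'a::idom:]) = card B"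
  by (subst degree_prod_eq_sum_degree) auto

lemma linear_factors_nonzero: "(\<Prod>b\<in>B. [:-b, 1::'a::idom:]) \<noteq> 0"
  by (cases "finite B") (auto simp: prod_zero_iff)

lemma esym_eq_0_if_card_less:
  assumes "finite B" and "card B < t"
  shows "esym t B = 0"
proof -
  have "{T. T \<subseteq> B \<and> card T = t} = {}"
    using assms(2) by (auto dest!: card_mono[OF assms(1)])
  then show ?thesis unfolding esym_def by (simp only: sum.empty)
qed

lemma coeff_linear_factors:
  fixes B :: "'a::comm_ring_1 set"
  assumes "finite B" and "t \<le> card B"
  shows "coeff (\<Prod>b\<in>B. [:-b, 1:]) t = (-1) ^ (card B - t) * esym (card B - t) B"
proof -
  have "(\<Prod>b\<in>B. [:-b, 1:]) = (\<Prod>b\<in>B. [:-b:] + [:0, 1:])" by simp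
  also have "\<dots> = (\<Sum>T\<in>Pow B. (\<Prod>b\<in>T. [:-b:]) * (\<Prod>b\<in>B-T. [:0, 1:]))"
    by (rule prod_add[OF assms(1)])
  also have "\<dots> = (\<Sum>T\<in>Pow B. monom ((-1) ^ card T * \<Prod>T) (card (B - T)))"
    by (intro sum.cong refl) (simp add: prod_to_poly prod_uminus monom_altdef)
  finally have "coeff (\<Prod>b\<in>B. [:-b, 1:]) t =
      (\<Sum>T\<in>Pow B. if card (B - T) = t then (-1) ^ card T * \<Prod>T else 0)"
    by (simp add: coeff_sum)
  also have "\<dots> = (\<Sum>T\<in>{T\<in>Pow B. card (B - T) = t}. (-1) ^ card T * \<Prod>T)"
    using assms(1) by (subst sum.inter_filter) auto
  also have "{T\<in>Pow B. card (B - T) = t} = {T. T \<subseteq> B \<and> card T = card B - t}"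
    using assms by (auto simp: card_Diff_subset finite_subset card_mono)
  finally show ?thesis by (simp add: esym_def sum_distrib_left)
qed

lemma coeff_linear_factors_mult_linear:
  fixes B :: "'a::comm_ring_1 set"
  assumes "finite B" and "j \<le> card B"
  shows "coeff ((\<Prod>b\<in>B. [:-b, 1:]) * [:u, v:]) (card B - j) =
    (-1) ^ j * (u * esym j B - v * esym (Suc j) B)"
proof (cases "j = card B")
  case True
  then show ?thesis
    using assms coeff_linear_factors[of B 0] esym_eq_0_if_card_less[of B "Suc j"]
    by (simp add: algebra_simps)
next
  case False
  then have "card B - j = Suc (card B - Suc j)" using assms(2) by simp
  then show ?thesis
    using assms False coeff_linear_factors[of B "card B - j"] coeff_linear_factors[of B "card B - Suc j"]
    by (simp add: algebra_simps)
qed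

lemma vanishing_poly_factor:
  fixes f :: "'a::idom poly"
  assumes "finite B" and "\<And>b. b \<in> B \<Longrightarrow> poly f b = 0" and "degree f \<le> card B + 1"
  shows "\<exists>u v. f = (\<Prod>b\<in>B. [:-b, 1:]) * [:u, v:]"
proof -
  have "(\<Prod>b\<in>B. [:-b, 1:]) dvd f"
    using assms(1,2) by (rule linear_factors_dvd)
  then obtain g where g: "f = (\<Prod>b\<in>B. [:-b, 1:]) * g" by (elim dvdE)
  have "degree g \<le> 1"
  proof (cases "g = 0")
    case False
    then show ?thesis
      using assms(3) g degree_mult_eq[OF linear_factors_nonzero False]
      by (simp add: degree_linear_factors[OF assms(1)])
  qed simp
  then have "g = [:coeff g 0, coeff g 1:]"
    by (intro poly_eqI) (auto simp: coeff_pCons coeff_eq_0 split: nat.split)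
  with g show ?thesis by metis
qed

lemma sum_fun_apply: "(\<Sum>i\<in>A. f i) x = (\<Sum>i\<in>A. f i x)"
  for f :: "'i \<Rightarrow> 'x \<Rightarrow> 'b::comm_monoid_add"
  by (induction A rule: infinite_finite_induct) auto

lemma vector_space_word_scale: "vector_space (word_scale :: 'a::field \<Rightarrow> _)"
  unfolding vector_space_def word_scale_def by (auto simp: fun_eq_iff algebra_simps)

lemma (in module) span_image_eq_range:
  assumes "finite I" and "inj_on f I"
  shows "span (f ` I) = range (\<lambda>m. \<Sum>i\<in>I. m i *s f i)"
proof -
  have "span (f ` I) = range (\<lambda>u. \<Sum>v\<in>f ` I. u v *s v)"
    using assms(1) by (intro span_finite finite_imageI)
  also have "\<dots> = range (\<lambda>m. \<Sum>i\<in>I. m i *s f i)"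
  proof safe
    fix u show "(\<Sum>v\<in>f ` I. u v *s v) \<in> range (\<lambda>m. \<Sum>i\<in>I. m i *s f i)"
      using assms(2) by (auto simp: sum.reindex)
  next
    fix m show "(\<Sum>i\<in>I. m i *s f i) \<in> range (\<lambda>u. \<Sum>v\<in>f ` I. u v *s v)"
      using assms(2) by (intro image_eqI[of _ _ "\<lambda>v. m (inv_into I f v)"]) (simp_all add: sum.reindex)
  qed
  finally show ?thesis .
qed

lemma (in module) independent_imageI:
  assumes "finite I" and "inj_on f I"
    and "\<And>m i. (\<Sum>i\<in>I. m i *s f i) = 0 \<Longrightarrow> i \<in> I \<Longrightarrow> m i = 0"
  shows "independent (f ` I)"
proof
  assume "dependent (f ` I)"
  then obtain u where u: "\<exists>v\<in>f ` I. u v \<noteq> 0" "(\<Sum>v\<in>f ` I. u v *s v) = 0"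
    unfolding dependent_finite[OF finite_imageI[OF assms(1)]] by blast
  have "u (f i) = 0" if "i \<in> I" for i
    using assms(3)[of "\<lambda>i. u (f i)" i] u(2) that assms(2) by (simp add: sum.reindex)
  then show False using u(1) by auto
qed

lemma code_dim_gen_code:
  fixes G :: "nat \<Rightarrow> nat \<Rightarrow> 'a::field"
  assumes indep: "\<And>m i. (\<And>j. j < n \<Longrightarrow> (\<Sum>i<k. m i * G i j) = 0) \<Longrightarrow> i < k \<Longrightarrow> m i = 0"
  shows "code_dim (gen_code n k G) = k"
proof -
  interpret V: vector_space "word_scale :: 'a \<Rightarrow> (nat \<Rightarrow> 'a) \<Rightarrow> _"
    by (rule vector_space_word_scale)
  define row where "row i = (\<lambda>j. if j < n then G i j else 0)" for i
  have comb: "(\<Sum>i<k. word_scale (m i) (row i)) = (\<lambda>j. if j < n then (\<Sum>i<k. m i * G i j) else 0)"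
    for m by (auto simp: fun_eq_iff sum_fun_apply word_scale_def row_def)
  have comb_zero: "m i = 0" if zero: "(\<Sum>i<k. word_scale (m i) (row i)) = 0" and "i < k" for m i
  proof (rule indep[OF _ \<open>i < k\<close>])
    fix j assume "j < n"
    then show "(\<Sum>i<k. m i * G i j) = 0" using fun_cong[OF zero[unfolded comb], of j] by simp
  qed
  have inj: "inj_on row {..<k}"
  proof
    fix i i' assume i: "i \<in> {..<k}" "i' \<in> {..<k}" "row i = row i'"
    define m :: "nat \<Rightarrow> 'a" where "m l = of_bool (l = i) - of_bool (l = i')" for l
    have "(\<Sum>l<k. word_scale (m l) (row l)) = row i - row i'"
      using i(1,2) by (auto simp: fun_eq_iff sum_fun_apply word_scale_def m_def left_diff_distrib sum_subtractf)
    then have "m i = 0" using comb_zero i by simp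
    then show "i = i'" by (auto simp: m_def split: if_splits)
  qed
  have span: "V.span (row ` {..<k}) = gen_code n k G"
    unfolding V.span_image_eq_range[OF finite_lessThan inj] gen_code_def comb by blast
  have "V.independent (row ` {..<k})"
  proof (rule V.independent_imageI[OF finite_lessThan inj])
    fix m i assume "(\<Sum>i<k. word_scale (m i) (row i)) = 0" and "i \<in> {..<k}"
    then show "m i = 0" using comb_zero by blast
  qed
  then have "V.dim (V.span (row ` {..<k})) = card (row ` {..<k})"
    by (rule V.dim_span_eq_card_independent)
  then show ?thesis using inj by (simp add: code_dim_def span card_image)
qed

definition eval_word :: "nat \<Rightarrow> (nat \<Rightarrow> 'a::comm_ring_1) \<Rightarrow> 'a poly \<Rightarrow> nat \<Rightarrow> 'a" where
  "eval_word n \<alpha> f = (\<lambda>j. if j < n then poly f (\<alpha> j) else 0)"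

definition root_count :: "nat \<Rightarrow> (nat \<Rightarrow> 'a::comm_ring_1) \<Rightarrow> 'a poly \<Rightarrow> nat" where
  "root_count n \<alpha> f = card {j. j < n \<and> poly f (\<alpha> j) = 0}"

lemma root_count_le: "root_count n \<alpha> f \<le> n"
  unfolding root_count_def by (rule order.trans[OF card_mono[of "{..<n}"]]) auto

lemma hamming_dist_eval_word:
  "hamming_dist n (eval_word n \<alpha> f) (eval_word n \<alpha> g) = n - root_count n \<alpha> (f - g)"
proof -
  have differ: "{j. j < n \<and> eval_word n \<alpha> f j \<noteq> eval_word n \<alpha> g j} =
      {..<n} - {j. j < n \<and> poly (f - g) (\<alpha> j) = 0}"
    by (auto simp: eval_word_def)
  show ?thesis
    unfolding hamming_dist_def root_count_def differ by (subst card_Diff_subset) auto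
qed

lemma eval_word_inj:
  fixes f g :: "'a::idom poly"
  assumes "eval_word n \<alpha> f = eval_word n \<alpha> g" "degree f < n" "degree g < n" "inj_on \<alpha> {..<n}"
  shows "f = g"
proof (rule poly_eqI_degree)
  fix x assume "x \<in> \<alpha> ` {..<n}"
  then obtain j where "j < n" "x = \<alpha> j" by blast
  then show "poly f x = poly g x"
    using fun_cong[OF assms(1), of j] by (simp add: eval_word_def)
qed (use assms(2-4) in \<open>simp_all add: card_image\<close>)

lemma hamming_dists_eval_code:
  fixes S :: "'a::idom poly set"
  assumes "0 \<in> S" and "\<And>f g. f \<in> S \<Longrightarrow> g \<in> S \<Longrightarrow> f - g \<in> S"
    and "\<And>f. f \<in> S \<Longrightarrow> degree f < n" and "inj_on \<alpha> {..<n}"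
  shows "{hamming_dist n c c' | c c'. c \<in> eval_word n \<alpha> ` S \<and> c' \<in> eval_word n \<alpha> ` S \<and> c \<noteq> c'} =
    (\<lambda>f. n - root_count n \<alpha> f) ` (S - {0})"
proof safe
  fix f g assume "f \<in> S" "g \<in> S" "eval_word n \<alpha> f \<noteq> eval_word n \<alpha> g"
  then show "hamming_dist n (eval_word n \<alpha> f) (eval_word n \<alpha> g) \<in> (\<lambda>f. n - root_count n \<alpha> f) ` (S - {0})"
    using assms(2) by (auto simp: hamming_dist_eval_word)
next
  fix f assume f: "f \<in> S" "f \<noteq> 0"
  have "eval_word n \<alpha> f \<noteq> eval_word n \<alpha> 0"
    using eval_word_inj[of n \<alpha> f 0] f assms(3,4) by force
  moreover have "n - root_count n \<alpha> f = hamming_dist n (eval_word n \<alpha> f) (eval_word n \<alpha> 0)"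
    by (simp add: hamming_dist_eval_word)
  ultimately show "\<exists>c c'. n - root_count n \<alpha> f = hamming_dist n c c' \<and>
      c \<in> eval_word n \<alpha> ` S \<and> c' \<in> eval_word n \<alpha> ` S \<and> c \<noteq> c'"
    using f(1) assms(1) by blast
qed

(* f\<^sub>0 stands in for the Singleton bound: its word has weight at most n - k + 1. *)
lemma is_MDS_eval_code_iff:
  fixes S :: "'a::field poly set"
  assumes "0 \<in> S" and "\<And>f g. f \<in> S \<Longrightarrow> g \<in> S \<Longrightarrow> f - g \<in> S"
    and "\<And>f. f \<in> S \<Longrightarrow> degree f < n" and "inj_on \<alpha> {..<n}"
    and "code_dim (eval_word n \<alpha> ` S) = k" and "k \<le> n"
    and "f\<^sub>0 \<in> S" and "f\<^sub>0 \<noteq> 0" and "k - 1 \<le> root_count n \<alpha> f\<^sub>0"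
  shows "is_MDS n (eval_word n \<alpha> ` S) \<longleftrightarrow> (\<forall>f\<in>S - {0}. root_count n \<alpha> f < k)"
proof -
  define W where "W = (\<lambda>f. n - root_count n \<alpha> f) ` (S - {0})"
  have "min_dist n (eval_word n \<alpha> ` S) = Min W"
    unfolding min_dist_def W_def by (rule arg_cong[where f = Min], rule hamming_dists_eval_code[OF assms(1-4)])
  then have MDS: "is_MDS n (eval_word n \<alpha> ` S) \<longleftrightarrow> Min W = n - k + 1"
    unfolding is_MDS_def assms(5) by simp
  have "finite W" unfolding W_def by (rule finite_subset[of _ "{..n}"]) auto
  show ?thesis
  proof
    assume "is_MDS n (eval_word n \<alpha> ` S)"
    show "\<forall>f\<in>S - {0}. root_count n \<alpha> f < k"
    proof
      fix f assume "f \<in> S - {0}"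
      then have "Min W \<le> n - root_count n \<alpha> f"
        by (intro Min_le[OF \<open>finite W\<close>]) (simp add: W_def)
      then show "root_count n \<alpha> f < k"
        using MDS \<open>is_MDS n (eval_word n \<alpha> ` S)\<close> root_count_le[of n \<alpha> f] by linarith
    qed
  next
    assume few_roots: "\<forall>f\<in>S - {0}. root_count n \<alpha> f < k"
    then have "root_count n \<alpha> f\<^sub>0 < k" using assms(7,8) by simp
    then have "n - root_count n \<alpha> f\<^sub>0 = n - k + 1"
      using assms(6,9) root_count_le[of n \<alpha> f\<^sub>0] by arith
    then have "n - k + 1 \<in> W"
      unfolding W_def using assms(7,8) by (intro image_eqI[of _ _ f\<^sub>0]) simp_all
    moreover have "n - k + 1 \<le> w" if "w \<in> W" for w
    proof -
      obtain f where f: "f \<in> S - {0}" "w = n - root_count n \<alpha> f"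
        using \<open>w \<in> W\<close> by (auto simp: W_def)
      then have "root_count n \<alpha> f < k" using few_roots by blast
      with f(2) assms(6) show ?thesis by arith
    qed
    ultimately show "is_MDS n (eval_word n \<alpha> ` S)"
      unfolding MDS using \<open>finite W\<close> by (intro Min_eqI) auto
  qed
qed

lemma le_root_count_iff:
  assumes "inj_on \<alpha> {..<n}"
  shows "m \<le> root_count n \<alpha> f \<longleftrightarrow> (\<exists>B\<subseteq>\<alpha> ` {..<n}. card B = m \<and> (\<forall>b\<in>B. poly f b = 0))"
proof
  assume "m \<le> root_count n \<alpha> f"
  then obtain J where J: "J \<subseteq> {j. j < n \<and> poly f (\<alpha> j) = 0}" "card J = m"
    unfolding root_count_def by (meson obtain_subset_with_card_n)
  moreover have "inj_on \<alpha> J"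
    using J(1) by (auto intro: inj_on_subset[OF assms])
  ultimately have "card (\<alpha> ` J) = m" by (simp add: card_image)
  with J show "\<exists>B\<subseteq>\<alpha> ` {..<n}. card B = m \<and> (\<forall>b\<in>B. poly f b = 0)"
    by (intro exI[of _ "\<alpha> ` J"]) auto
next
  assume "\<exists>B\<subseteq>\<alpha> ` {..<n}. card B = m \<and> (\<forall>b\<in>B. poly f b = 0)"
  then obtain B where B: "B \<subseteq> \<alpha> ` {..<n}" "card B = m" "\<forall>b\<in>B. poly f b = 0" by blast
  define J where "J = {j. j < n \<and> \<alpha> j \<in> B}"
  have "\<alpha> ` J = B" using B(1) by (auto simp: J_def)
  moreover have "inj_on \<alpha> J"
    by (auto simp: J_def intro: inj_on_subset[OF assms])
  ultimately have "card J = m" using B(2) card_image by fastforce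
  moreover have "J \<subseteq> {j. j < n \<and> poly f (\<alpha> j) = 0}" using B(3) by (auto simp: J_def)
  ultimately show "m \<le> root_count n \<alpha> f"
    unfolding root_count_def by (metis card_mono finite_Collect_conjI finite_lessThan lessThan_def)
qed

definition gap_polys :: "nat \<Rightarrow> nat \<Rightarrow> 'a::comm_ring_1 poly set" where
  "gap_polys k r = {f. degree f \<le> k + 1 \<and> coeff f (k - r - 1) = 0 \<and> coeff f (k - r) = 0}"

lemma gap_polys_diff: "f \<in> gap_polys k r \<Longrightarrow> g \<in> gap_polys k r \<Longrightarrow> f - g \<in> gap_polys k r"
  unfolding gap_polys_def by (auto intro: order.trans[OF degree_diff_le])

lemma row_exp_inj: "inj (row_exp k r)"
  by (auto simp: inj_def row_exp_def split: if_splits)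

lemma row_exp_image:
  assumes "r < k"
  shows "row_exp k r ` {..<k} = {..k + 1} - {k - r - 1, k - r}"
proof
  show "row_exp k r ` {..<k} \<subseteq> {..k + 1} - {k - r - 1, k - r}"
    using assms by (auto simp: row_exp_def)
  show "{..k + 1} - {k - r - 1, k - r} \<subseteq> row_exp k r ` {..<k}"
  proof
    fix t assume "t \<in> {..k + 1} - {k - r - 1, k - r}"
    then show "t \<in> row_exp k r ` {..<k}"
      using assms by (cases "t < k - r - 1")
        (auto simp: row_exp_def intro!: image_eqI[of _ _ t] image_eqI[of _ _ "t - 2"])
  qed
qed

lemma poly_gap_polys:
  assumes "f \<in> gap_polys k r" and "r < k"
  shows "poly f x = (\<Sum>i<k. coeff f (row_exp k r i) * x ^ row_exp k r i)"
proof -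
  have "poly f x = (\<Sum>t\<le>k + 1. coeff f t * x ^ t)"
    unfolding poly_altdef using assms(1)
    by (intro sum.mono_neutral_left) (auto simp: gap_polys_def coeff_eq_0)
  also have "\<dots> = (\<Sum>t\<in>row_exp k r ` {..<k}. coeff f t * x ^ t)"
    using assms by (intro sum.mono_neutral_right) (auto simp: gap_polys_def row_exp_image)
  also have "\<dots> = (\<Sum>i<k. coeff f (row_exp k r i) * x ^ row_exp k r i)"
    using row_exp_inj by (subst sum.reindex) (auto intro: inj_on_subset)
  finally show ?thesis .
qed

lemma row_monoms_in_gap_polys:
  assumes "r < k"
  shows "(\<Sum>i<k. monom (m i) (row_exp k r i)) \<in> gap_polys k r"
proof -
  have "row_exp k r i \<le> k + 1" "row_exp k r i \<noteq> k - r - 1" "row_exp k r i \<noteq> k - r" if "i < k" for i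
    using row_exp_image[OF assms] that by blast+
  then show ?thesis unfolding gap_polys_def
    by (auto simp: coeff_sum intro!: degree_sum_le order.trans[OF degree_monom_le])
qed

lemma coeff_row_monoms:
  "i < k \<Longrightarrow> coeff (\<Sum>i<k. monom (m i) (row_exp k r i)) (row_exp k r i) = m i"
  using row_exp_inj[of k r] by (simp add: coeff_sum inj_eq if_distrib cong: if_cong)

lemma gen_code_G_mat:
  assumes "r < k"
  shows "gen_code n k (G_mat k r \<alpha>) = eval_word n \<alpha> ` gap_polys k r"
proof
  show "gen_code n k (G_mat k r \<alpha>) \<subseteq> eval_word n \<alpha> ` gap_polys k r"
  proof
    fix c assume "c \<in> gen_code n k (G_mat k r \<alpha>)"
    then obtain m where "c = (\<lambda>j. if j < n then \<Sum>i<k. m i * G_mat k r \<alpha> i j else 0)"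
      unfolding gen_code_def by blast
    then have "c = eval_word n \<alpha> (\<Sum>i<k. monom (m i) (row_exp k r i))"
      by (auto simp: eval_word_def G_mat_def poly_sum poly_monom)
    then show "c \<in> eval_word n \<alpha> ` gap_polys k r"
      using row_monoms_in_gap_polys[OF assms] by blast
  qed
  show "eval_word n \<alpha> ` gap_polys k r \<subseteq> gen_code n k (G_mat k r \<alpha>)"
    unfolding gen_code_def eval_word_def G_mat_def
    by (auto intro!: exI[of _ "\<lambda>i. coeff f (row_exp k r i)" for f] simp: poly_gap_polys assms)
qed

lemma code_dim_G_mat:
  fixes \<alpha> :: "nat \<Rightarrow> 'a::field"
  assumes "r < k" and "k + 2 \<le> n" and "inj_on \<alpha> {..<n}"
  shows "code_dim (gen_code n k (G_mat k r \<alpha>)) = k"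
proof (rule code_dim_gen_code)
  fix m i assume zero: "\<And>j. j < n \<Longrightarrow> (\<Sum>i<k. m i * G_mat k r \<alpha> i j) = 0" and "i < k"
  define p where "p = (\<Sum>i<k. monom (m i) (row_exp k r i))"
  have "eval_word n \<alpha> p = eval_word n \<alpha> 0"
    using zero by (auto simp: eval_word_def p_def G_mat_def poly_sum poly_monom)
  moreover have "degree p < n"
    using row_monoms_in_gap_polys[OF assms(1), of m] assms(2) by (simp add: p_def gap_polys_def)
  ultimately have "p = 0" using eval_word_inj assms(3) by fastforce
  then show "m i = 0" using coeff_row_monoms[OF \<open>i < k\<close>, of m r] by (simp add: p_def)
qed

lemma gap_polys_vanishing_exists:
  fixes A :: "'a::field set"
  assumes "finite A" and "card A < k" and "r < k"
  shows "\<exists>f\<in>gap_polys k r. f \<noteq> 0 \<and> (\<forall>a\<in>A. poly f a = 0)"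
proof -
  define Q where "Q = (\<Prod>a\<in>A. [:-a, 1:])"
  define Q1 where "Q1 = pCons 0 Q"
  define Q2 where "Q2 = pCons 0 Q1"
  obtain c1 c2 c3 where c: "c1 \<noteq> 0 \<or> c2 \<noteq> 0 \<or> c3 \<noteq> 0"
    "coeff Q (k - r - 1) * c1 + coeff Q1 (k - r - 1) * c2 + coeff Q2 (k - r - 1) * c3 = 0"
    "coeff Q (k - r) * c1 + coeff Q1 (k - r) * c2 + coeff Q2 (k - r) * c3 = 0"
    using nontrivial_solution_2x3 by blast
  define f where "f = Q * [:c1, c2, c3:]"
  have f_eq: "f = smult c1 Q + smult c2 Q1 + smult c3 Q2"
    by (simp add: f_def Q1_def Q2_def smult_pCons[symmetric] add.assoc)
  have "degree [:c1, c2, c3:] \<le> 2" by (simp add: degree_pCons_le)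
  then have "degree f \<le> k + 1"
    using degree_mult_le[of Q "[:c1, c2, c3:]"] degree_linear_factors[OF assms(1)] assms(2)
    unfolding f_def Q_def by linarith
  moreover have "coeff f (k - r - 1) = 0" "coeff f (k - r) = 0"
    using c(2,3) by (simp_all add: f_eq algebra_simps)
  moreover have "f \<noteq> 0"
    using c(1) linear_factors_nonzero[of A] by (simp add: f_def Q_def del: mult_pCons_right)
  moreover have "poly f a = 0" if "a \<in> A" for a
    using that assms(1) by (simp add: f_def Q_def poly_prod prod_zero_iff del: mult_pCons_right)
  ultimately show ?thesis unfolding gap_polys_def by blast
qed

lemma gap_polys_vanishing_iff:
  fixes B :: "'a::field set"
  assumes "finite B" and "card B = k" and "r < k"
  shows "(\<exists>f\<in>gap_polys k r. f \<noteq> 0 \<and> (\<forall>b\<in>B. poly f b = 0)) \<longleftrightarrow>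
    esym (r + 1) B ^ 2 - esym r B * esym (r + 2) B = 0"
proof -
  define P where "P = (\<Prod>b\<in>B. [:-b, 1:])"
  have in_gap: "P * [:u, v:] \<in> gap_polys k r \<longleftrightarrow>
      u * esym (r + 1) B = v * esym (r + 2) B \<and> u * esym r B = v * esym (r + 1) B" for u v
  proof -
    have "degree [:u, v:] \<le> 1" by simp
    then have "degree (P * [:u, v:]) \<le> k + 1"
      using degree_mult_le[of P "[:u, v:]"] degree_linear_factors[OF assms(1)] assms(2)
      unfolding P_def by linarith
    moreover have "coeff (P * [:u, v:]) (k - r - 1) = (-1) ^ Suc r * (u * esym (r + 1) B - v * esym (r + 2) B)"
      using coeff_linear_factors_mult_linear[OF assms(1), of "Suc r" u v] assms
      by (simp add: P_def Suc_diff_Suc del: mult_pCons_right)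
    moreover have "coeff (P * [:u, v:]) (k - r) = (-1) ^ r * (u * esym r B - v * esym (r + 1) B)"
      using coeff_linear_factors_mult_linear[OF assms(1), of r u v] assms
      by (simp add: P_def del: mult_pCons_right)
    ultimately show ?thesis
      unfolding gap_polys_def by (simp del: mult_pCons_right)
  qed
  have "(\<exists>f\<in>gap_polys k r. f \<noteq> 0 \<and> (\<forall>b\<in>B. poly f b = 0)) \<longleftrightarrow>
      (\<exists>u v. (u \<noteq> 0 \<or> v \<noteq> 0) \<and> P * [:u, v:] \<in> gap_polys k r)"
  proof
    assume "\<exists>f\<in>gap_polys k r. f \<noteq> 0 \<and> (\<forall>b\<in>B. poly f b = 0)"
    then obtain f where f: "f \<in> gap_polys k r" "f \<noteq> 0" "\<forall>b\<in>B. poly f b = 0" by blast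
    then obtain u v where uv: "f = P * [:u, v:]"
      using vanishing_poly_factor[OF assms(1)] assms(2) unfolding P_def gap_polys_def by blast
    with f(2) have "u \<noteq> 0 \<or> v \<noteq> 0" by auto
    with f(1) uv show "\<exists>u v. (u \<noteq> 0 \<or> v \<noteq> 0) \<and> P * [:u, v:] \<in> gap_polys k r" by blast
  next
    assume "\<exists>u v. (u \<noteq> 0 \<or> v \<noteq> 0) \<and> P * [:u, v:] \<in> gap_polys k r"
    then obtain u v where "u \<noteq> 0 \<or> v \<noteq> 0" "P * [:u, v:] \<in> gap_polys k r" by blast
    moreover have "poly P b = 0" if "b \<in> B" for b
      using that assms(1) by (auto simp: P_def poly_prod prod_zero_iff)
    ultimately show "\<exists>f\<in>gap_polys k r. f \<noteq> 0 \<and> (\<forall>b\<in>B. poly f b = 0)"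
      using linear_factors_nonzero[of B]
      by (intro bexI[of _ "P * [:u, v:]"]) (auto simp: P_def simp del: mult_pCons_right)
  qed
  also have "\<dots> \<longleftrightarrow> esym (r + 1) B * esym (r + 1) B = esym (r + 2) B * esym r B"
    unfolding in_gap by (rule singular_2x2_iff)
  also have "\<dots> \<longleftrightarrow> esym (r + 1) B ^ 2 - esym r B * esym (r + 2) B = 0"
    by (simp add: power2_eq_square mult.commute)
  finally show ?thesis .
qed

lemma gap_polys_singleton_witness:
  fixes \<alpha> :: "nat \<Rightarrow> 'a::field"
  assumes "r < k" and "k \<le> n" and "inj_on \<alpha> {..<n}"
  shows "\<exists>f\<in>gap_polys k r. f \<noteq> 0 \<and> k - 1 \<le> root_count n \<alpha> f"
proof -
  have card: "card (\<alpha> ` {..<k - 1}) = k - 1"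
    using inj_on_subset[OF assms(3)] assms(2) by (simp add: card_image)
  then obtain f where f: "f \<in> gap_polys k r" "f \<noteq> 0" "\<forall>a\<in>\<alpha> ` {..<k - 1}. poly f a = 0"
    using gap_polys_vanishing_exists[of "\<alpha> ` {..<k - 1}" k r] assms(1) by auto
  have "k - 1 \<le> root_count n \<alpha> f"
    unfolding le_root_count_iff[OF assms(3)] using f(3) card assms(2)
    by (intro exI[of _ "\<alpha> ` {..<k - 1}"]) auto
  with f(1,2) show ?thesis by blast
qed

lemma gap_polys_few_roots_iff:
  fixes \<alpha> :: "nat \<Rightarrow> 'a::field"
  assumes "r < k" and "inj_on \<alpha> {..<n}"
  shows "(\<forall>f\<in>gap_polys k r - {0}. root_count n \<alpha> f < k) \<longleftrightarrow>
    (\<forall>B. B \<subseteq> \<alpha> ` {..<n} \<and> card B = k \<longrightarrow> esym (r + 1) B ^ 2 - esym r B * esym (r + 2) B \<noteq> 0)"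
proof -
  have vanishing: "(\<exists>f\<in>gap_polys k r. f \<noteq> 0 \<and> (\<forall>b\<in>B. poly f b = 0)) \<longleftrightarrow>
      esym (r + 1) B ^ 2 - esym r B * esym (r + 2) B = 0"
    if "B \<subseteq> \<alpha> ` {..<n}" and "card B = k" for B
    using finite_subset[OF that(1)] that(2) assms(1) by (simp add: gap_polys_vanishing_iff)
  have "(\<forall>f\<in>gap_polys k r - {0}. root_count n \<alpha> f < k) \<longleftrightarrow>
      \<not> (\<exists>B\<subseteq>\<alpha> ` {..<n}. card B = k \<and> (\<exists>f\<in>gap_polys k r. f \<noteq> 0 \<and> (\<forall>b\<in>B. poly f b = 0)))"
    unfolding not_le[symmetric] le_root_count_iff[OF assms(2)] by auto
  with vanishing show ?thesis by (metis (no_types, lifting))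
qed

theorem theorem3p11:
  fixes \<alpha> :: "nat \<Rightarrow> 'a::{field,finite}"
    and n k r :: nat
  assumes "3 \<le> k" and "k + 2 \<le> n" and "n \<le> card (UNIV :: 'a set)"
    and "1 \<le> r" and "r \<le> k - 1"
    and "inj_on \<alpha> {..<n}"
  shows "is_MDS n (gen_code n k (G_mat k r \<alpha>)) \<longleftrightarrow>
    (\<forall>B. B \<subseteq> \<alpha> ` {..<n} \<and> card B = k \<longrightarrow>
       esym (r + 1) B ^ 2 - esym r B * esym (r + 2) B \<noteq> 0)"
proof -
  have "r < k" using assms(1,5) by linarith
  have code: "gen_code n k (G_mat k r \<alpha>) = eval_word n \<alpha> ` gap_polys k r"
    using gen_code_G_mat[OF \<open>r < k\<close>] .
  have dim: "code_dim (eval_word n \<alpha> ` gap_polys k r) = k"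
    using code_dim_G_mat[OF \<open>r < k\<close> assms(2,6)] unfolding code .
  obtain f\<^sub>0 where "f\<^sub>0 \<in> gap_polys k r" "f\<^sub>0 \<noteq> 0" "k - 1 \<le> root_count n \<alpha> f\<^sub>0"
    using gap_polys_singleton_witness[OF \<open>r < k\<close> _ assms(6)] assms(2) by auto
  then have "is_MDS n (eval_word n \<alpha> ` gap_polys k r) \<longleftrightarrow>
      (\<forall>f\<in>gap_polys k r - {0}. root_count n \<alpha> f < k)"
    using is_MDS_eval_code_iff[OF _ gap_polys_diff _ assms(6) dim] assms(2)
    by (simp add: gap_polys_def)
  also have "\<dots> \<longleftrightarrow> (\<forall>B. B \<subseteq> \<alpha> ` {..<n} \<and> card B = k \<longrightarrow>
      esym (r + 1) B ^ 2 - esym r B * esym (r + 2) B \<noteq> 0)"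
    by (rule gap_polys_few_roots_iff[OF \<open>r < k\<close> assms(6)])
  finally show ?thesis unfolding code .
qed

end
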